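(* Let $a=1$, $b=-1$. For all $(J,E)\in D_1$ one has $\frac{\partial T}{\partial E}(J,E)>0$ and $\frac{\partial T}{\partial J}(J,E)<0$.
   Context: With $a=1$, $b=-1$, let $V_J(r)=\frac{J^2}{2r^2}+\frac{r^2}{2}-\frac{r^4}{4}$. For $0<J<\sqrt{4/27}$ write $J=q(1-q^2)=Q(1-Q^2)$ with $0<q<1/\sqrt3<Q<1$, and set $E_-(J)=\frac14(1-Q^2)(3Q^2+1)$, $E_+(J)=\frac14(1-q^2)(3q^2+1)$. Let $D_1=\{(J,E):0<J<\sqrt{4/27},\ E_-(J)<E<E_+(J)\}$. For $(J,E)\in D_1$, let $r_1<r_2<r_3$ be the positive roots of $E-V_J(r)$ and define $T(J,E)=2\int_{r_1}^{r_2}\frac{dr}{\sqrt{2(E-V_J(r))}}$ (the period of the modulus of the solution of $u_{xx}+u-|u|^2u=0$ with $\operatorname{Im}(u\bar u_x)=J$ and $\frac12|u_x|^2+\frac12|u|^2-\frac14|u|^4=E$). *)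

theory Defs
  imports "HOL-Analysis.Analysis"
begin

text \<open>Effective potential with a = 1, b = -1.\<close>
definition VJ :: "real \<Rightarrow> real \<Rightarrow> real" where
  "VJ J r = J\<^sup>2 / (2 * r\<^sup>2) + r\<^sup>2 / 2 - r ^ 4 / 4"

definition small_q :: "real \<Rightarrow> real" where
  "small_q J = (THE q. 0 < q \<and> q < 1 / sqrt 3 \<and> q * (1 - q\<^sup>2) = J)"

definition big_Q :: "real \<Rightarrow> real" where
  "big_Q J = (THE Q. 1 / sqrt 3 < Q \<and> Q < 1 \<and> Q * (1 - Q\<^sup>2) = J)"

definition E_minus :: "real \<Rightarrow> real" where
  "E_minus J = (1 - (big_Q J)\<^sup>2) * (3 * (big_Q J)\<^sup>2 + 1) / 4"

definition E_plus :: "real \<Rightarrow> real" where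
  "E_plus J = (1 - (small_q J)\<^sup>2) * (3 * (small_q J)\<^sup>2 + 1) / 4"

definition D1 :: "(real \<times> real) set" where
  "D1 = {(J, E). 0 < J \<and> J < sqrt (4 / 27) \<and> E_minus J < E \<and> E < E_plus J}"

text \<open>Positive roots of E - V_J; on D1 there are exactly three, r1 < r2 < r3.\<close>
definition pos_roots :: "real \<Rightarrow> real \<Rightarrow> real set" where
  "pos_roots J E = {r. 0 < r \<and> E - VJ J r = 0}"

definition root1 :: "real \<Rightarrow> real \<Rightarrow> real" where
  "root1 J E = Min (pos_roots J E)"

definition root2 :: "real \<Rightarrow> real \<Rightarrow> real" where
  "root2 J E = Min (pos_roots J E - {root1 J E})"

text \<open>Period of the modulus (improper integral, as a Henstock-Kurzweil integral).\<close>
definition period :: "real \<Rightarrow> real \<Rightarrow> real" where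
  "period J E = 2 * integral {root1 J E .. root2 J E} (\<lambda>r. 1 / sqrt (2 * (E - VJ J r)))"

end

theory Submission
  imports Defs
begin

text \<open>
  With s = r^2 one has 4 r^2 (E - V_J(r)) = P(s) = s^3 - 2 s^2 + 4 E s - 2 J^2, and on D1 the cubic
  P has roots 0 < s1 < s2 < s3 with s1 + s2 + s3 = 2, the r_i being their square roots.
  The substitution s = s1 cos^2 t + s2 sin^2 t removes the endpoint singularities of the period:
  T(J, E) = 2 sqrt 2 * integral over [0, pi/2] of D(t)^(-1/2), where D = s3 - s1 cos^2 t - s2 sin^2 t.
  The roots are simple, so they move differentiably, with velocities (4 J dJ - 4 s_i dE) / P'(s_i),
  and differentiating under the integral sign turns dT into the integral of
  ((1 + cos^2 t) ds1 + (1 + sin^2 t) ds2) / (2 D^(3/2)).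
  Since s1 < s2, D is smaller where sin^2 t is larger; adding the values at t and pi/2 - t therefore
  gives a positive integrand as soon as ds2 > 0 and ds1 + ds2 > 0. By Vieta's formulas both hold in
  the direction dE = 1, while in the direction dJ = 1 (J > 0) both reversed inequalities hold.
\<close>

section \<open>The radial cubic and its roots\<close>

definition radial_cubic :: "real \<Rightarrow> real \<Rightarrow> real \<Rightarrow> real" where
  "radial_cubic J E s = s ^ 3 - 2 * s ^ 2 + 4 * E * s - 2 * J ^ 2"

definition radial_cubic_deriv :: "real \<Rightarrow> real \<Rightarrow> real" where
  "radial_cubic_deriv E s = 3 * s ^ 2 - 4 * s + 4 * E"

lemma radial_cubic_VJ:
  assumes "r > 0"
  shows "4 * r ^ 2 * (E - VJ J r) = radial_cubic J E (r ^ 2)"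
  using assms unfolding VJ_def radial_cubic_def
  by (simp add: field_simps power2_eq_square power3_eq_cube) (simp add: algebra_simps power4_eq_xxxx)

lemma radial_cubic_diff:
  "radial_cubic J E x - radial_cubic J0 E0 y =
     (x - y) * (x ^ 2 + x * y + y ^ 2 - 2 * (x + y) + 4 * E) + 4 * y * (E - E0) - 2 * (J + J0) * (J - J0)"
  unfolding radial_cubic_def by (simp add: algebra_simps power2_eq_square power3_eq_cube)

lemma radial_cubic_factor:
  assumes "x1 \<noteq> x2" "x1 \<noteq> x3" "x2 \<noteq> x3"
    and "radial_cubic J E x1 = 0" "radial_cubic J E x2 = 0" "radial_cubic J E x3 = 0"
  shows "x3 = 2 - x1 - x2" "radial_cubic J E s = (s - x1) * (s - x2) * (s - x3)"
proof -
  have quadratic: "x ^ 2 + x * y + y ^ 2 - 2 * (x + y) + 4 * E = 0"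
    if "x \<noteq> y" "radial_cubic J E x = 0" "radial_cubic J E y = 0" for x y
    using radial_cubic_diff[of J E x J E y] that by simp
  have quadratic12: "x1 ^ 2 + x1 * x2 + x2 ^ 2 - 2 * (x1 + x2) + 4 * E = 0"
    using quadratic assms by blast
  have "(x2 - x3) * (x1 + x2 + x3 - 2) = 0"
    using quadratic12 quadratic[of x1 x3] assms by (simp add: algebra_simps power2_eq_square)
  then show x3: "x3 = 2 - x1 - x2" using assms by simp
  have "2 * J ^ 2 = x1 ^ 3 - 2 * x1 ^ 2 + 4 * E * x1"
    using assms(4) by (simp add: radial_cubic_def)
  with quadratic12 show "radial_cubic J E s = (s - x1) * (s - x2) * (s - x3)"
    unfolding radial_cubic_def x3 by algebra
qed

definition root_triple :: "real \<Rightarrow> real \<Rightarrow> real \<Rightarrow> real \<Rightarrow> bool" where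
  "root_triple J E s1 s2 \<longleftrightarrow> 0 < s1 \<and> s1 < s2 \<and> s2 < 2 - s1 - s2 \<and>
     (\<forall>s. radial_cubic J E s = (s - s1) * (s - s2) * (s - (2 - s1 - s2)))"

lemma root_tripleD:
  assumes "root_triple J E s1 s2"
  shows "0 < s1" "s1 < s2" "s2 < 2 - s1 - s2"
    and "radial_cubic J E s = (s - s1) * (s - s2) * (s - (2 - s1 - s2))"
  using assms by (auto simp: root_triple_def)

lemma pos_roots_root_triple:
  assumes "root_triple J E s1 s2"
  shows "pos_roots J E = {sqrt s1, sqrt s2, sqrt (2 - s1 - s2)}"
proof -
  note s = root_tripleD[OF assms]
  have "r \<in> pos_roots J E \<longleftrightarrow> r > 0 \<and> radial_cubic J E (r ^ 2) = 0" for r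
    using radial_cubic_VJ[of r E J] by (auto simp: pos_roots_def)
  also have "\<dots> r \<longleftrightarrow> r \<in> {sqrt s1, sqrt s2, sqrt (2 - s1 - s2)}" for r
  proof -
    have "r > 0 \<Longrightarrow> r = sqrt a \<longleftrightarrow> r ^ 2 = a" for a by auto
    then show ?thesis using s by (auto simp: s(4))
  qed
  finally show ?thesis by blast
qed

lemma root1_root2_root_triple:
  assumes "root_triple J E s1 s2"
  shows "root1 J E = sqrt s1" "root2 J E = sqrt s2"
proof -
  note s = root_tripleD[OF assms]
  then have "sqrt s1 < sqrt s2" "sqrt s2 < sqrt (2 - s1 - s2)" by auto
  then show "root1 J E = sqrt s1" "root2 J E = sqrt s2"
    unfolding root1_def root2_def pos_roots_root_triple[OF assms]
    by (auto simp: Min_insert insert_Diff_if)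
qed

definition squared_root1 :: "real \<Rightarrow> real \<Rightarrow> real" where
  "squared_root1 J E = (root1 J E) ^ 2"

definition squared_root2 :: "real \<Rightarrow> real \<Rightarrow> real" where
  "squared_root2 J E = (root2 J E) ^ 2"

lemma squared_roots_root_triple:
  assumes "root_triple J E s1 s2"
  shows "squared_root1 J E = s1" "squared_root2 J E = s2"
  using root1_root2_root_triple[OF assms] root_tripleD(1,2)[OF assms]
  by (simp_all add: squared_root1_def squared_root2_def)

lemma radial_cubic_deriv_root_triple:
  assumes "root_triple J E s1 s2"
  shows "radial_cubic_deriv E s1 = (s2 - s1) * ((2 - s1 - s2) - s1)"
    and "radial_cubic_deriv E s2 = - ((s2 - s1) * ((2 - s1 - s2) - s2))"
proof -
  have "4 * E = s1 * s2 + (s1 + s2) * (2 - s1 - s2)"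
    using root_tripleD(4)[OF assms, of 0] root_tripleD(4)[OF assms, of 1]
    by (simp add: radial_cubic_def algebra_simps)
  then show "radial_cubic_deriv E s1 = (s2 - s1) * ((2 - s1 - s2) - s1)"
    and "radial_cubic_deriv E s2 = - ((s2 - s1) * ((2 - s1 - s2) - s2))"
    unfolding radial_cubic_deriv_def by (simp_all add: algebra_simps power2_eq_square)
qed

lemma root_triple_if_sign_changes:
  assumes "0 \<le> a0" "a0 < a1" "a1 \<le> a2" "a2 < a3" "a3 \<le> a4" "a4 < a5"
    and "radial_cubic J E a0 < 0" "radial_cubic J E a1 > 0" "radial_cubic J E a2 > 0"
    and "radial_cubic J E a3 < 0" "radial_cubic J E a4 < 0" "radial_cubic J E a5 > 0"
  shows "\<exists>s1 s2. root_triple J E s1 s2 \<and> s1 \<in> {a0<..<a1} \<and> s2 \<in> {a2<..<a3}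
           \<and> 2 - s1 - s2 \<in> {a4<..<a5}"
proof -
  have cont: "continuous_on A (radial_cubic J E)" for A
    unfolding radial_cubic_def by (intro continuous_intros)
  obtain s1 where s1: "a0 \<le> s1" "s1 \<le> a1" "radial_cubic J E s1 = 0"
    using IVT'[of "radial_cubic J E" a0 0 a1] assms cont by force
  obtain s2 where s2: "a2 \<le> s2" "s2 \<le> a3" "radial_cubic J E s2 = 0"
    using IVT2'[of "radial_cubic J E" a3 0 a2] assms cont by force
  obtain s3 where s3: "a4 \<le> s3" "s3 \<le> a5" "radial_cubic J E s3 = 0"
    using IVT'[of "radial_cubic J E" a4 0 a5] assms cont by force
  have strict: "s1 \<noteq> a0" "s1 \<noteq> a1" "s2 \<noteq> a2" "s2 \<noteq> a3" "s3 \<noteq> a4" "s3 \<noteq> a5"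
    using assms s1 s2 s3 by auto
  have "s1 < s2" "s2 < s3" using s1 s2 s3 strict assms by auto
  note factor = radial_cubic_factor[of s1 s2 s3, OF _ _ _ s1(3) s2(3) s3(3)]
  have "root_triple J E s1 s2"
    unfolding root_triple_def using factor \<open>s1 < s2\<close> \<open>s2 < s3\<close> s1 strict assms by auto
  then show ?thesis
    using factor \<open>s1 < s2\<close> \<open>s2 < s3\<close> s1 s2 s3 strict by (intro exI[of _ s1] exI[of _ s2]) auto
qed

lemma root_triple_perturb:
  assumes triple: "root_triple J0 E0 s1 s2" and "\<epsilon> > 0"
    and J: "(Jf \<longlongrightarrow> J0) F" and E: "(Ef \<longlongrightarrow> E0) F"
  shows "\<forall>\<^sub>F x in F. \<exists>t1 t2. root_triple (Jf x) (Ef x) t1 t2 \<and> \<bar>t1 - s1\<bar> < \<epsilon> \<and> \<bar>t2 - s2\<bar> < \<epsilon>"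
proof -
  define s3 where "s3 = 2 - s1 - s2"
  note s = root_tripleD[OF triple, folded s3_def]
  define d where "d = min \<epsilon> (min (s1 / 2) (min ((s2 - s1) / 3) ((s3 - s2) / 3)))"
  have d: "d > 0" "d \<le> \<epsilon>" "d \<le> s1 / 2" "d \<le> (s2 - s1) / 3" "d \<le> (s3 - s2) / 3"
    using s \<open>\<epsilon> > 0\<close> unfolding d_def by (simp_all add: min_def)
  have sign3:
    "a < 0 \<Longrightarrow> b < 0 \<Longrightarrow> c < 0 \<Longrightarrow> a * b * c < 0"
    "a > 0 \<Longrightarrow> b < 0 \<Longrightarrow> c < 0 \<Longrightarrow> a * b * c > 0"
    "a > 0 \<Longrightarrow> b > 0 \<Longrightarrow> c < 0 \<Longrightarrow> a * b * c < 0"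
    "a > 0 \<Longrightarrow> b > 0 \<Longrightarrow> c > 0 \<Longrightarrow> a * b * c > 0" for a b c :: real
    by (auto intro: mult_pos_neg mult_neg_neg mult_pos_pos mult_neg_pos)
  have signs: "radial_cubic J0 E0 (s1 - d) < 0" "radial_cubic J0 E0 (s1 + d) > 0"
    "radial_cubic J0 E0 (s2 - d) > 0" "radial_cubic J0 E0 (s2 + d) < 0"
    "radial_cubic J0 E0 (s3 - d) < 0" "radial_cubic J0 E0 (s3 + d) > 0"
    unfolding s(4) s3_def[symmetric] using d s by (intro sign3; simp)+
  have lim: "((\<lambda>x. radial_cubic (Jf x) (Ef x) a) \<longlongrightarrow> radial_cubic J0 E0 a) F" for a
    unfolding radial_cubic_def by (intro tendsto_intros J E)
  have "\<forall>\<^sub>F x in F. radial_cubic (Jf x) (Ef x) (s1 - d) < 0 \<and> radial_cubic (Jf x) (Ef x) (s1 + d) > 0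
     \<and> radial_cubic (Jf x) (Ef x) (s2 - d) > 0 \<and> radial_cubic (Jf x) (Ef x) (s2 + d) < 0
     \<and> radial_cubic (Jf x) (Ef x) (s3 - d) < 0 \<and> radial_cubic (Jf x) (Ef x) (s3 + d) > 0"
    using order_tendstoD(2)[OF lim signs(1)] order_tendstoD(1)[OF lim signs(2)]
      order_tendstoD(1)[OF lim signs(3)] order_tendstoD(2)[OF lim signs(4)]
      order_tendstoD(2)[OF lim signs(5)] order_tendstoD(1)[OF lim signs(6)]
    by (simp add: eventually_conj_iff)
  then show ?thesis
  proof eventually_elim
    case (elim x)
    then obtain t1 t2 where "root_triple (Jf x) (Ef x) t1 t2" "t1 \<in> {s1 - d<..<s1 + d}"
      "t2 \<in> {s2 - d<..<s2 + d}"
      using root_triple_if_sign_changes[of "s1 - d" "s1 + d" "s2 - d" "s2 + d" "s3 - d" "s3 + d" "Jf x" "Ef x"]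
        d s by auto
    then show ?case using d by (intro exI[of _ t1] exI[of _ t2]) auto
  qed
qed

lemma squared_roots_tendsto:
  assumes triple: "root_triple J0 E0 s1 s2" and J: "(Jf \<longlongrightarrow> J0) F" and E: "(Ef \<longlongrightarrow> E0) F"
  shows "\<forall>\<^sub>F x in F. root_triple (Jf x) (Ef x) (squared_root1 (Jf x) (Ef x)) (squared_root2 (Jf x) (Ef x))"
    and "((\<lambda>x. squared_root1 (Jf x) (Ef x)) \<longlongrightarrow> s1) F"
    and "((\<lambda>x. squared_root2 (Jf x) (Ef x)) \<longlongrightarrow> s2) F"
proof -
  have near: "\<forall>\<^sub>F x in F. root_triple (Jf x) (Ef x) (squared_root1 (Jf x) (Ef x)) (squared_root2 (Jf x) (Ef x))
      \<and> dist (squared_root1 (Jf x) (Ef x)) s1 < \<epsilon> \<and> dist (squared_root2 (Jf x) (Ef x)) s2 < \<epsilon>"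
    if "\<epsilon> > 0" for \<epsilon>
    using root_triple_perturb[OF triple that J E]
    by eventually_elim (metis squared_roots_root_triple dist_real_def)
  show "\<forall>\<^sub>F x in F. root_triple (Jf x) (Ef x) (squared_root1 (Jf x) (Ef x)) (squared_root2 (Jf x) (Ef x))"
    using near[OF zero_less_one] by eventually_elim simp
  show "((\<lambda>x. squared_root1 (Jf x) (Ef x)) \<longlongrightarrow> s1) F" "((\<lambda>x. squared_root2 (Jf x) (Ef x)) \<longlongrightarrow> s2) F"
    by (auto intro!: tendstoI elim!: eventually_mono[OF near])
qed

section \<open>Three roots on the domain D1\<close>

lemma the_unique_root_between:
  fixes f :: "real \<Rightarrow> real"
  assumes "a \<le> b" and cont: "continuous_on {a..b} f" and inj: "inj_on f {a<..<b}"
    and "(f a - y) * (f b - y) < 0"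
  defines "x \<equiv> THE x. a < x \<and> x < b \<and> f x = y"
  shows "a < x \<and> x < b \<and> f x = y"
proof -
  have "f a \<noteq> y" "f b \<noteq> y" using assms(4) by auto
  moreover obtain x where "a \<le> x" "x \<le> b" "f x = y"
  proof (cases "f a < y")
    case True
    then have "y < f b" using assms(4) by (simp add: mult_less_0_iff)
    then show ?thesis using IVT'[of f a y b] True assms(1) cont that by auto
  next
    case False
    then have "f b < y" using assms(4) by (simp add: mult_less_0_iff)
    then show ?thesis using IVT2'[of f b y a] False assms(1) cont that by auto
  qed
  ultimately have "a < x \<and> x < b \<and> f x = y" by (metis order_le_less)
  moreover have "x' = x" if "a < x' \<and> x' < b \<and> f x' = y" for x'
    using inj_onD[OF inj, of x' x] that \<open>a < x \<and> x < b \<and> f x = y\<close> by auto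
  ultimately show ?thesis unfolding x_def by (rule theI)
qed

lemma inv_sqrt_3_squared: "(1 / sqrt 3) ^ 2 = (1 / 3 :: real)"
  by (simp add: power_divide)

lemma sqrt_4_27_eq: "sqrt (4 / 27) = 2 / 3 * (1 / sqrt 3)"
  by (rule real_sqrt_unique) (simp_all add: power_mult_distrib power_divide)

lemma cubic_branch_increasing:
  assumes "0 \<le> a" "a < b" "b \<le> 1 / sqrt 3"
  shows "a * (1 - a ^ 2) < b * (1 - b ^ 2)"
proof -
  have "b ^ 2 \<le> 1 / 3"
    using power_mono[OF assms(3), of 2] assms inv_sqrt_3_squared by simp
  moreover have "a ^ 2 < b ^ 2" using assms by (intro power_strict_mono) auto
  moreover have "a * b < b ^ 2" using assms by (simp add: power2_eq_square)
  ultimately have "0 < (b - a) * (1 - (a ^ 2 + a * b + b ^ 2))" using assms by simp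
  then show ?thesis by (simp add: algebra_simps power2_eq_square)
qed

lemma cubic_branch_decreasing:
  assumes "1 / sqrt 3 \<le> a" "a < b"
  shows "b * (1 - b ^ 2) < a * (1 - a ^ 2)"
proof -
  have "0 < a" using assms(1) less_le_trans[of 0 "1 / sqrt 3" a] by simp
  have "1 / 3 \<le> a ^ 2"
    using power_mono[OF assms(1), of 2] inv_sqrt_3_squared by simp
  moreover have "a ^ 2 < b ^ 2" using assms \<open>0 < a\<close> by (intro power_strict_mono) auto
  moreover have "a ^ 2 < a * b" using assms \<open>0 < a\<close> by (simp add: power2_eq_square)
  ultimately have "(b - a) * (1 - (a ^ 2 + a * b + b ^ 2)) < 0"
    using assms by (simp add: mult_pos_neg)
  then show ?thesis by (simp add: algebra_simps power2_eq_square)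
qed

lemma small_q_root:
  assumes "0 < J" "J < sqrt (4 / 27)"
  shows "0 < small_q J \<and> small_q J < 1 / sqrt 3 \<and> small_q J * (1 - (small_q J) ^ 2) = J"
  unfolding small_q_def
proof (rule the_unique_root_between)
  show "inj_on (\<lambda>q. q * (1 - q ^ 2)) {0<..<1 / sqrt 3}"
    by (rule inj_onI) (metis greaterThanLessThan_iff less_imp_le linorder_neq_iff cubic_branch_increasing)
  show "((\<lambda>q. q * (1 - q ^ 2)) 0 - J) * ((\<lambda>q. q * (1 - q ^ 2)) (1 / sqrt 3) - J) < 0"
    using assms by (simp add: sqrt_4_27_eq inv_sqrt_3_squared mult_neg_pos)
qed (auto intro!: continuous_intros)

lemma big_Q_root:
  assumes "0 < J" "J < sqrt (4 / 27)"
  shows "1 / sqrt 3 < big_Q J \<and> big_Q J < 1 \<and> big_Q J * (1 - (big_Q J) ^ 2) = J"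
  unfolding big_Q_def
proof (rule the_unique_root_between)
  show "inj_on (\<lambda>q. q * (1 - q ^ 2)) {1 / sqrt 3<..<1}"
    by (rule inj_onI) (metis greaterThanLessThan_iff less_imp_le linorder_neq_iff cubic_branch_decreasing)
  show "((\<lambda>q. q * (1 - q ^ 2)) (1 / sqrt 3) - J) * ((\<lambda>q. q * (1 - q ^ 2)) 1 - J) < 0"
    using assms by (simp add: sqrt_4_27_eq inv_sqrt_3_squared mult_pos_neg)
qed (auto intro!: continuous_intros)

text \<open>The radius sqrt (1 - q^2) is a critical point of V_J when J = q (1 - q^2), with critical
  value (1 - q^2) (3 q^2 + 1) / 4; hence E_minus and E_plus.\<close>

lemma radial_cubic_at_critical_point:
  "J = q * (1 - q ^ 2) \<Longrightarrow> radial_cubic J E (1 - q ^ 2) = (1 - q ^ 2) * (4 * E - (1 - q ^ 2) * (3 * q ^ 2 + 1))"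
  unfolding radial_cubic_def by algebra

lemma D1_root_triple:
  assumes "(J, E) \<in> D1"
  obtains s1 s2 where "root_triple J E s1 s2"
proof -
  from assms have J: "0 < J" "J < sqrt (4 / 27)" and E: "E_minus J < E" "E < E_plus J"
    by (auto simp: D1_def)
  define q where "q = small_q J"
  define Q where "Q = big_Q J"
  have q: "0 < q" "q < 1 / sqrt 3" "J = q * (1 - q ^ 2)" using small_q_root[OF J] by (auto simp: q_def)
  have Q: "1 / sqrt 3 < Q" "Q < 1" "J = Q * (1 - Q ^ 2)" using big_Q_root[OF J] by (auto simp: Q_def)
  have "q ^ 2 < Q ^ 2" "Q ^ 2 < 1"
    using q Q by (auto intro!: power_strict_mono simp: abs_square_less_1 less_trans[of 0 "1 / sqrt 3"])
  have "0 < (1 - Q ^ 2) * (3 * Q ^ 2 + 1) / 4"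
    using \<open>Q ^ 2 < 1\<close> by (simp add: add_nonneg_pos)
  then have "E > 0" using E by (simp add: E_minus_def Q_def)
  have "sqrt (4 / 27 :: real) < 1" using real_sqrt_less_mono[of "4 / 27" 1] by simp
  then have "J < 1" using J by linarith
  then have "J ^ 2 < 1" using J by (simp add: abs_square_less_1)
  have "\<exists>s1 s2. root_triple J E s1 s2 \<and> s1 \<in> {0<..<1 - Q ^ 2} \<and> s2 \<in> {1 - Q ^ 2<..<1 - q ^ 2}
           \<and> 2 - s1 - s2 \<in> {1 - q ^ 2<..<3}"
  proof (rule root_triple_if_sign_changes)
    show "radial_cubic J E 0 < 0" using J by (simp add: radial_cubic_def)
    show "radial_cubic J E (1 - Q ^ 2) > 0" "radial_cubic J E (1 - Q ^ 2) > 0"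
      using radial_cubic_at_critical_point[OF Q(3), of E] \<open>Q ^ 2 < 1\<close> E
      by (simp_all add: E_minus_def Q_def)
    show "radial_cubic J E (1 - q ^ 2) < 0" "radial_cubic J E (1 - q ^ 2) < 0"
      using radial_cubic_at_critical_point[OF q(3), of E] \<open>q ^ 2 < Q ^ 2\<close> \<open>Q ^ 2 < 1\<close> E
      by (simp_all add: E_plus_def q_def mult_pos_neg)
    show "radial_cubic J E 3 > 0" using \<open>E > 0\<close> \<open>J ^ 2 < 1\<close> by (simp add: radial_cubic_def)
  qed ((use \<open>q ^ 2 < Q ^ 2\<close> \<open>Q ^ 2 < 1\<close> zero_le_power2[of q] in linarith)+)
  then show ?thesis using that by blast
qed

section \<open>The period as a regular integral\<close>

text \<open>The radicand after the substitution s = s1 cos^2 t + s2 sin^2 t; 2 - s1 - s2 is the third root.\<close>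

definition radicand :: "real \<Rightarrow> real \<Rightarrow> real \<Rightarrow> real" where
  "radicand s1 s2 t = 2 - s1 - s2 - (s1 * (cos t) ^ 2 + s2 * (sin t) ^ 2)"

lemma cos_sin_combination_between:
  fixes a b t :: real
  assumes "a \<le> b"
  shows "a \<le> a * (cos t) ^ 2 + b * (sin t) ^ 2" "a * (cos t) ^ 2 + b * (sin t) ^ 2 \<le> b"
proof -
  have "a * (cos t) ^ 2 + a * (sin t) ^ 2 \<le> a * (cos t) ^ 2 + b * (sin t) ^ 2"
    "a * (cos t) ^ 2 + b * (sin t) ^ 2 \<le> b * (cos t) ^ 2 + b * (sin t) ^ 2"
    using assms by (simp_all add: mult_right_mono)
  then show "a \<le> a * (cos t) ^ 2 + b * (sin t) ^ 2" "a * (cos t) ^ 2 + b * (sin t) ^ 2 \<le> b"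
    by (simp_all flip: distrib_left)
qed

lemma radicand_pos:
  assumes "s1 \<le> s2" "s1 + 2 * s2 < 2"
  shows "0 < radicand s1 s2 t"
  using cos_sin_combination_between(2)[OF assms(1), of t] assms(2) by (simp add: radicand_def)

lemma root_triple_radicand_pos: "root_triple J E s1 s2 \<Longrightarrow> 0 < radicand s1 s2 t"
  using root_tripleD(2,3) by (intro radicand_pos) fastforce+

lemma continuous_on_inv_sqrt_radicand:
  assumes "\<And>t. 0 < radicand s1 s2 t"
  shows "continuous_on A (\<lambda>t. 1 / sqrt (radicand s1 s2 t))"
proof -
  have "radicand s1 s2 t \<noteq> 0" for t using assms[of t] by simp
  then show ?thesis unfolding radicand_def by (intro continuous_intros) auto
qed

text \<open>Unlike has_integral_substitution_strong, this allows f to be unbounded at the ends of the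
  interval, by passing through the nonnegative Lebesgue integral.\<close>

lemma has_integral_substitution_nonneg:
  fixes f g g' :: "real \<Rightarrow> real"
  assumes f: "f \<in> borel_measurable borel" "\<And>x. x \<in> {g a..g b} \<Longrightarrow> 0 \<le> f x"
    and g: "\<And>x. x \<in> {a..b} \<Longrightarrow> (g has_real_derivative g' x) (at x)"
    and g': "continuous_on {a..b} g'" "\<And>x. x \<in> {a..b} \<Longrightarrow> 0 \<le> g' x"
    and "a \<le> b" and I: "((\<lambda>x. f (g x) * g' x) has_integral I) {a..b}"
  shows "(f has_integral I) {g a..g b}"
proof -
  have "g x \<in> {g a..g b}" if "x \<in> {a..b}" for x
    using that deriv_nonneg_imp_mono[of a x g g'] deriv_nonneg_imp_mono[of x b g g'] g g'(2)
    by auto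
  then have nonneg: "0 \<le> f (g x) * g' x" if "x \<in> {a..b}" for x
    using that f(2) g'(2) by simp
  then have "0 \<le> I" using has_integral_nonneg[OF I] by blast
  have "(\<integral>\<^sup>+x. ennreal (f x * indicator {g a..g b} x) \<partial>lborel)
      = (\<integral>\<^sup>+x. ennreal (f (g x) * g' x * indicator {a..b} x) \<partial>lborel)"
    using f g g' \<open>a \<le> b\<close>
    by (intro nn_integral_substitution) (auto simp: set_borel_measurable_def)
  also have "\<dots> = (\<integral>\<^sup>+x. ennreal (f (g x) * g' x) * indicator {a..b} x \<partial>lborel)"
    by (intro nn_integral_cong) (auto simp: indicator_def)
  also have "\<dots> = ennreal I"
    using nonneg I by (rule nn_integral_has_integral_lebesgue')
  finally have "((\<lambda>x. f x * indicator {g a..g b} x) has_integral I) UNIV"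
    using f \<open>0 \<le> I\<close> by (intro nn_integral_has_integral) (auto simp: indicator_def)
  moreover have "(\<lambda>x. f x * indicator {g a..g b} x) = (\<lambda>x. if x \<in> {g a..g b} then f x else 0)"
    by (auto simp: fun_eq_iff indicator_def)
  ultimately show ?thesis by (metis has_integral_restrict_UNIV)
qed

lemma energy_minus_VJ_root_triple:
  assumes "root_triple J E s1 s2" "r > 0"
  shows "2 * (E - VJ J r) = (r ^ 2 - s1) * (s2 - r ^ 2) * (2 - s1 - s2 - r ^ 2) / (2 * r ^ 2)"
  using radial_cubic_VJ[OF assms(2), of E J] root_tripleD(4)[OF assms(1), of "r ^ 2"] assms(2)
  by (simp add: field_simps)

lemma VJ_le_between_roots:
  assumes triple: "root_triple J E s1 s2" and r: "sqrt s1 \<le> r" "r \<le> sqrt s2"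
  shows "VJ J r \<le> E"
proof -
  note s = root_tripleD[OF triple]
  have "r > 0" using r s by (auto intro: less_le_trans[of 0 "sqrt s1"])
  moreover have "s1 \<le> r ^ 2" using r by (auto intro: sqrt_le_D)
  moreover have "r ^ 2 \<le> s2" using power_mono[of r "sqrt s2" 2] r \<open>r > 0\<close> s by simp
  ultimately have "0 \<le> (r ^ 2 - s1) * (s2 - r ^ 2) * (2 - s1 - s2 - r ^ 2) / (2 * r ^ 2)"
    using s by (intro divide_nonneg_pos mult_nonneg_nonneg) auto
  then show ?thesis using energy_minus_VJ_root_triple[OF triple \<open>r > 0\<close>] by simp
qed

lemma sqrt_cos_sin_combination_has_derivative:
  fixes s1 s2 t :: real
  assumes "0 < s1 * (cos t) ^ 2 + s2 * (sin t) ^ 2"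
  shows "((\<lambda>t. sqrt (s1 * (cos t) ^ 2 + s2 * (sin t) ^ 2)) has_real_derivative
      (s2 - s1) * sin t * cos t / sqrt (s1 * (cos t) ^ 2 + s2 * (sin t) ^ 2)) (at t)"
proof -
  have "((\<lambda>t. s1 * (cos t) ^ 2 + s2 * (sin t) ^ 2) has_real_derivative 2 * ((s2 - s1) * sin t * cos t)) (at t)"
    by (rule derivative_eq_intros refl)+ (simp add: algebra_simps)
  from DERIV_chain2[OF DERIV_real_sqrt[OF assms] this] show ?thesis
    by (rule DERIV_cong) (use assms in \<open>simp add: field_simps\<close>)
qed

lemma VJ_substitution:
  assumes triple: "root_triple J E s1 s2" and t: "0 < t" "t < pi / 2"
  defines "r \<equiv> sqrt (s1 * (cos t) ^ 2 + s2 * (sin t) ^ 2)"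
  shows "1 / sqrt (2 * (E - VJ J r)) * ((s2 - s1) * sin t * cos t / r) = sqrt 2 / sqrt (radicand s1 s2 t)"
proof -
  note s = root_tripleD[OF triple]
  define S where "S = s1 * (cos t) ^ 2 + s2 * (sin t) ^ 2"
  define w where "w = (s2 - s1) * sin t * cos t"
  have "sin t > 0" "cos t > 0" using t by (auto intro!: sin_gt_zero cos_gt_zero)
  then have "w > 0" using s by (simp add: w_def)
  have "S > 0" using cos_sin_combination_between(1)[of s1 s2 t] s by (simp add: S_def)
  then have r: "r > 0" "r ^ 2 = S" "sqrt S = r" by (simp_all add: r_def S_def)
  have D: "radicand s1 s2 t = 2 - s1 - s2 - S" by (simp add: radicand_def S_def)
  have "radicand s1 s2 t > 0" by (rule root_triple_radicand_pos[OF triple])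
  have "r ^ 2 - s1 = (s2 - s1) * (sin t) ^ 2"
    unfolding r(2) S_def by (simp add: cos_squared_eq algebra_simps)
  moreover have "s2 - r ^ 2 = (s2 - s1) * (cos t) ^ 2"
    unfolding r(2) S_def by (simp add: sin_squared_eq algebra_simps)
  ultimately have "(r ^ 2 - s1) * (s2 - r ^ 2) = w ^ 2"
    by (simp add: w_def power_mult_distrib power2_eq_square)
  then have eq: "sqrt (2 * (E - VJ J r)) = w * sqrt (radicand s1 s2 t) / (sqrt 2 * r)"
    using energy_minus_VJ_root_triple[OF triple r(1)] \<open>w > 0\<close> r
    by (simp add: D real_sqrt_mult real_sqrt_divide)
  show ?thesis
    unfolding w_def[symmetric] eq using \<open>w > 0\<close> r(1) \<open>radicand s1 s2 t > 0\<close> by (simp add: field_simps)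
qed

lemma period_eq_integral_radicand:
  assumes triple: "root_triple J E s1 s2"
  shows "period J E = 2 * sqrt 2 * integral {0..pi / 2} (\<lambda>t. 1 / sqrt (radicand s1 s2 t))"
proof -
  note s = root_tripleD[OF triple]
  define S where "S t = s1 * (cos t) ^ 2 + s2 * (sin t) ^ 2" for t
  define g where "g t = sqrt (S t)" for t
  define g' where "g' t = (s2 - s1) * sin t * cos t / g t" for t
  define f where "f r = 1 / sqrt (2 * (E - VJ J r))" for r
  have S_pos: "S t > 0" for t using cos_sin_combination_between(1)[of s1 s2 t] s by (simp add: S_def)
  have g_deriv: "(g has_real_derivative g' t) (at t)" for t
    using sqrt_cos_sin_combination_has_derivative[of s1 t s2] S_pos[of t]
    unfolding g_def[abs_def] g'_def S_def by simp
  have g'_cont: "continuous_on {0..pi / 2} g'"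
    using S_pos[THEN less_imp_neq] unfolding g'_def g_def S_def by (intro continuous_intros) auto
  have g'_nonneg: "g' t \<ge> 0" if "t \<in> {0..pi / 2}" for t
    using that s S_pos
    by (auto simp: g'_def g_def intro!: divide_nonneg_pos mult_nonneg_nonneg sin_ge_zero cos_ge_zero)
  have g_ends: "g 0 = sqrt s1" "g (pi / 2) = sqrt s2" by (simp_all add: g_def S_def)
  have f_nonneg: "0 \<le> f r" if "r \<in> {g 0..g (pi / 2)}" for r
    using VJ_le_between_roots[OF triple] that g_ends by (simp add: f_def)
  have f_meas: "f \<in> borel_measurable borel" unfolding f_def VJ_def by measurable
  have fg_integral: "((\<lambda>t. f (g t) * g' t) has_integral sqrt 2 * I) {0..pi / 2}"
    if I: "((\<lambda>t. 1 / sqrt (radicand s1 s2 t)) has_integral I) {0..pi / 2}" for I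
  proof (rule has_integral_spike_finite[of "{0, pi / 2}"])
    show "f (g t) * g' t = sqrt 2 * (1 / sqrt (radicand s1 s2 t))" if "t \<in> {0..pi / 2} - {0, pi / 2}" for t
      using VJ_substitution[OF triple, of t] that by (simp add: f_def g_def g'_def S_def)
  qed (use has_integral_mult_right[OF I] in auto)
  have radicand_integral: "((\<lambda>t. 1 / sqrt (radicand s1 s2 t)) has_integral
      integral {0..pi / 2} (\<lambda>t. 1 / sqrt (radicand s1 s2 t))) {0..pi / 2}"
    using continuous_on_inv_sqrt_radicand[OF root_triple_radicand_pos[OF triple]]
    by (intro integrable_integral integrable_continuous_interval)
  have "(f has_integral sqrt 2 * integral {0..pi / 2} (\<lambda>t. 1 / sqrt (radicand s1 s2 t)))
      {g 0..g (pi / 2)}"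
    using has_integral_substitution_nonneg[OF f_meas f_nonneg g_deriv g'_cont g'_nonneg _
          fg_integral[OF radicand_integral]] pi_gt_zero by simp
  then have "integral {root1 J E..root2 J E} f = sqrt 2 * integral {0..pi / 2} (\<lambda>t. 1 / sqrt (radicand s1 s2 t))"
    unfolding root1_root2_root_triple[OF triple] g_ends by (rule integral_unique)
  then show ?thesis unfolding period_def f_def by simp
qed

section \<open>Differentiability of the period\<close>

text \<open>Implicit differentiation of radial_cubic J E s = 0 in the direction (dJ, dE).\<close>

definition root_velocity :: "real \<Rightarrow> real \<Rightarrow> real \<Rightarrow> real \<Rightarrow> real \<Rightarrow> real" where
  "root_velocity J E dJ dE s = (4 * J * dJ - 4 * s * dE) / radial_cubic_deriv E s"

lemma radial_cubic_root_has_derivative: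
  fixes \<sigma> Jf Ef :: "real \<Rightarrow> real"
  assumes J: "(Jf has_real_derivative dJ) (at t0)" and E: "(Ef has_real_derivative dE) (at t0)"
    and \<sigma>: "(\<sigma> \<longlongrightarrow> \<sigma> t0) (at t0)"
    and roots: "\<forall>\<^sub>F t in at t0. radial_cubic (Jf t) (Ef t) (\<sigma> t) = 0"
    and root0: "radial_cubic (Jf t0) (Ef t0) (\<sigma> t0) = 0"
    and simple: "radial_cubic_deriv (Ef t0) (\<sigma> t0) \<noteq> 0"
  shows "(\<sigma> has_real_derivative root_velocity (Jf t0) (Ef t0) dJ dE (\<sigma> t0)) (at t0)"
proof -
  define M where "M t = (\<sigma> t) ^ 2 + \<sigma> t * \<sigma> t0 + (\<sigma> t0) ^ 2 - 2 * (\<sigma> t + \<sigma> t0) + 4 * Ef t" for t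
  have JE: "(Jf \<longlongrightarrow> Jf t0) (at t0)" "(Ef \<longlongrightarrow> Ef t0) (at t0)"
    using J E by (auto dest!: DERIV_isCont simp: isCont_def)
  have "(M \<longlongrightarrow> radial_cubic_deriv (Ef t0) (\<sigma> t0)) (at t0)"
  proof -
    have "(M \<longlongrightarrow> (\<sigma> t0) ^ 2 + \<sigma> t0 * \<sigma> t0 + (\<sigma> t0) ^ 2 - 2 * (\<sigma> t0 + \<sigma> t0) + 4 * Ef t0) (at t0)"
      unfolding M_def by (intro tendsto_intros \<sigma> JE)
    then show ?thesis by (simp add: radial_cubic_deriv_def power2_eq_square algebra_simps)
  qed
  moreover have "((\<lambda>t. (Jf t - Jf t0) / (t - t0)) \<longlongrightarrow> dJ) (at t0)"
    "((\<lambda>t. (Ef t - Ef t0) / (t - t0)) \<longlongrightarrow> dE) (at t0)"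
    using J E by (simp_all add: has_field_derivative_iff)
  ultimately have "((\<lambda>t. (2 * (Jf t + Jf t0) * ((Jf t - Jf t0) / (t - t0))
        - 4 * \<sigma> t0 * ((Ef t - Ef t0) / (t - t0))) / M t)
      \<longlongrightarrow> (2 * (Jf t0 + Jf t0) * dJ - 4 * \<sigma> t0 * dE) / radial_cubic_deriv (Ef t0) (\<sigma> t0)) (at t0)"
    using simple by (intro tendsto_intros JE)
  moreover have "(2 * (Jf t0 + Jf t0) * dJ - 4 * \<sigma> t0 * dE) / radial_cubic_deriv (Ef t0) (\<sigma> t0)
      = root_velocity (Jf t0) (Ef t0) dJ dE (\<sigma> t0)"
    by (simp add: root_velocity_def)
  ultimately have lim: "((\<lambda>t. (2 * (Jf t + Jf t0) * ((Jf t - Jf t0) / (t - t0))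
        - 4 * \<sigma> t0 * ((Ef t - Ef t0) / (t - t0))) / M t)
      \<longlongrightarrow> root_velocity (Jf t0) (Ef t0) dJ dE (\<sigma> t0)) (at t0)"
    by simp
  have "\<forall>\<^sub>F t in at t0. M t \<noteq> 0"
    using tendsto_imp_eventually_ne[OF \<open>(M \<longlongrightarrow> _) (at t0)\<close> simple] .
  then have "\<forall>\<^sub>F t in at t0. (2 * (Jf t + Jf t0) * ((Jf t - Jf t0) / (t - t0))
        - 4 * \<sigma> t0 * ((Ef t - Ef t0) / (t - t0))) / M t = (\<sigma> t - \<sigma> t0) / (t - t0)"
    using roots eventually_neq_at_within[of t0 t0 UNIV]
  proof eventually_elim
    case (elim t)
    have "2 * (Jf t + Jf t0) * ((Jf t - Jf t0) / (t - t0)) - 4 * \<sigma> t0 * ((Ef t - Ef t0) / (t - t0))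
        = (2 * (Jf t + Jf t0) * (Jf t - Jf t0) - 4 * \<sigma> t0 * (Ef t - Ef t0)) / (t - t0)"
      by (simp only: times_divide_eq_right diff_divide_distrib[symmetric])
    also have "\<dots> = (\<sigma> t - \<sigma> t0) * M t / (t - t0)"
      using radial_cubic_diff[of "Jf t" "Ef t" "\<sigma> t" "Jf t0" "Ef t0" "\<sigma> t0"] elim root0
      by (simp add: M_def algebra_simps)
    finally show ?case using elim by simp
  qed
  from Lim_transform_eventually[OF lim this] show ?thesis
    unfolding has_field_derivative_iff by simp
qed

lemma squared_roots_has_derivative:
  assumes J: "(Jf has_real_derivative dJ) (at t0)" and E: "(Ef has_real_derivative dE) (at t0)"
    and triple: "root_triple (Jf t0) (Ef t0) s1 s2"
  shows "((\<lambda>t. squared_root1 (Jf t) (Ef t)) has_real_derivative root_velocity (Jf t0) (Ef t0) dJ dE s1) (at t0)"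
    and "((\<lambda>t. squared_root2 (Jf t) (Ef t)) has_real_derivative root_velocity (Jf t0) (Ef t0) dJ dE s2) (at t0)"
proof -
  have JE: "(Jf \<longlongrightarrow> Jf t0) (at t0)" "(Ef \<longlongrightarrow> Ef t0) (at t0)"
    using J E by (auto dest!: DERIV_isCont simp: isCont_def)
  note near = squared_roots_tendsto[OF triple JE]
  note at_t0 = squared_roots_root_triple[OF triple]
  have "\<forall>\<^sub>F t in at t0. radial_cubic (Jf t) (Ef t) (squared_root1 (Jf t) (Ef t)) = 0"
    "\<forall>\<^sub>F t in at t0. radial_cubic (Jf t) (Ef t) (squared_root2 (Jf t) (Ef t)) = 0"
    using near(1) by (auto elim!: eventually_mono simp: root_tripleD(4))
  moreover have "radial_cubic (Jf t0) (Ef t0) s1 = 0" "radial_cubic (Jf t0) (Ef t0) s2 = 0"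
    "radial_cubic_deriv (Ef t0) s1 \<noteq> 0" "radial_cubic_deriv (Ef t0) s2 \<noteq> 0"
    using root_tripleD[OF triple] radial_cubic_deriv_root_triple[OF triple] by auto
  ultimately show
    "((\<lambda>t. squared_root1 (Jf t) (Ef t)) has_real_derivative root_velocity (Jf t0) (Ef t0) dJ dE s1) (at t0)"
    "((\<lambda>t. squared_root2 (Jf t) (Ef t)) has_real_derivative root_velocity (Jf t0) (Ef t0) dJ dE s2) (at t0)"
    using radial_cubic_root_has_derivative[OF J E, where \<sigma> = "\<lambda>t. squared_root1 (Jf t) (Ef t)"]
      radial_cubic_root_has_derivative[OF J E, where \<sigma> = "\<lambda>t. squared_root2 (Jf t) (Ef t)"]
      near(2,3) at_t0 by simp_all
qed

definition inv_sqrt_radicand_deriv :: "real \<Rightarrow> real \<Rightarrow> real \<Rightarrow> real \<Rightarrow> real \<Rightarrow> real" where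
  "inv_sqrt_radicand_deriv s1 s2 ds1 ds2 t =
     ((1 + (cos t) ^ 2) * ds1 + (1 + (sin t) ^ 2) * ds2) / (2 * radicand s1 s2 t * sqrt (radicand s1 s2 t))"

lemma inv_sqrt_radicand_has_derivative:
  assumes X: "(X has_real_derivative dX) (at x within U)" and Y: "(Y has_real_derivative dY) (at x within U)"
    and pos: "0 < radicand (X x) (Y x) t"
  shows "((\<lambda>x. 1 / sqrt (radicand (X x) (Y x) t)) has_real_derivative
      inv_sqrt_radicand_deriv (X x) (Y x) dX dY t) (at x within U)"
proof -
  define D where "D = radicand (X x) (Y x) t"
  define dD where "dD = - ((1 + (cos t) ^ 2) * dX + (1 + (sin t) ^ 2) * dY)"
  have "((\<lambda>x. radicand (X x) (Y x) t) has_real_derivative dD) (at x within U)"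
    unfolding radicand_def dD_def by (rule derivative_eq_intros X Y refl)+ (simp add: algebra_simps)
  from DERIV_chain2[OF DERIV_real_sqrt[OF pos] this, folded D_def]
  have "((\<lambda>x. sqrt (radicand (X x) (Y x) t)) has_real_derivative inverse (sqrt D) / 2 * dD) (at x within U)" .
  from DERIV_divide[OF DERIV_const this, of 1]
  have "((\<lambda>x. 1 / sqrt (radicand (X x) (Y x) t)) has_real_derivative
      (0 * sqrt D - 1 * (inverse (sqrt D) / 2 * dD)) / (sqrt D * sqrt D)) (at x within U)"
    using pos by (simp add: D_def)
  moreover have "(0 * sqrt D - 1 * (inverse (sqrt D) / 2 * dD)) / (sqrt D * sqrt D)
      = inv_sqrt_radicand_deriv (X x) (Y x) dX dY t"
    using pos unfolding inv_sqrt_radicand_deriv_def D_def[symmetric] dD_def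
    by (simp add: field_simps)
  ultimately show ?thesis by simp
qed

lemma continuous_on_Times_inv_sqrt_radicand_deriv:
  fixes a b da db :: "real \<Rightarrow> real"
  assumes "continuous_on U a" "continuous_on U b" "continuous_on U da" "continuous_on U db"
    and pos: "\<And>u x. u \<in> U \<Longrightarrow> 0 < radicand (a u) (b u) x"
  shows "continuous_on (U \<times> K) (\<lambda>(u, x). inv_sqrt_radicand_deriv (a u) (b u) (da u) (db u) x)"
proof -
  have fst: "continuous_on (U \<times> K) (\<lambda>p. f (fst p))" if "continuous_on U f" for f :: "real \<Rightarrow> real"
    by (rule continuous_on_compose2[OF that continuous_on_fst[OF continuous_on_id]]) auto
  have "radicand (a (fst p)) (b (fst p)) (snd p) \<noteq> 0" if "p \<in> U \<times> K" for p
    using pos[of "fst p" "snd p"] that by auto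
  moreover have "continuous_on (U \<times> K) (\<lambda>p. radicand (a (fst p)) (b (fst p)) (snd p))"
    unfolding radicand_def by (intro continuous_intros fst assms)
  ultimately show ?thesis
    unfolding split_beta inv_sqrt_radicand_deriv_def by (intro continuous_intros fst assms) simp_all
qed

lemma integral_inv_sqrt_radicand_has_derivative:
  assumes U: "open U" "convex U" "t0 \<in> U"
    and S1: "\<And>t. t \<in> U \<Longrightarrow> (S1 has_real_derivative V1 t) (at t)"
    and S2: "\<And>t. t \<in> U \<Longrightarrow> (S2 has_real_derivative V2 t) (at t)"
    and V: "continuous_on U V1" "continuous_on U V2"
    and pos: "\<And>t x. t \<in> U \<Longrightarrow> 0 < radicand (S1 t) (S2 t) x"
  shows "((\<lambda>t. integral {0..pi / 2} (\<lambda>x. 1 / sqrt (radicand (S1 t) (S2 t) x))) has_real_derivative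
      integral {0..pi / 2} (inv_sqrt_radicand_deriv (S1 t0) (S2 t0) (V1 t0) (V2 t0))) (at t0)"
proof -
  have "((\<lambda>t. integral (cbox 0 (pi / 2)) (\<lambda>x. 1 / sqrt (radicand (S1 t) (S2 t) x))) has_real_derivative
      integral (cbox 0 (pi / 2)) (inv_sqrt_radicand_deriv (S1 t0) (S2 t0) (V1 t0) (V2 t0))) (at t0 within U)"
  proof (rule leibniz_rule_field_derivative[OF _ _ _ U(3,2)])
    show "((\<lambda>t. 1 / sqrt (radicand (S1 t) (S2 t) x)) has_real_derivative
        inv_sqrt_radicand_deriv (S1 t) (S2 t) (V1 t) (V2 t) x) (at t within U)" if "t \<in> U" for t x
      using has_field_derivative_at_within[OF S1[OF that]] has_field_derivative_at_within[OF S2[OF that]]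
        pos[OF that]
      by (rule inv_sqrt_radicand_has_derivative)
    show "(\<lambda>x. 1 / sqrt (radicand (S1 t) (S2 t) x)) integrable_on cbox 0 (pi / 2)" if "t \<in> U" for t
      using continuous_on_inv_sqrt_radicand[OF pos[OF that]] by (rule integrable_continuous)
    have "continuous_on U S1" "continuous_on U S2"
      using S1 S2 by (auto intro!: continuous_at_imp_continuous_on DERIV_isCont)
    then show "continuous_on (U \<times> cbox 0 (pi / 2))
        (\<lambda>(t, x). inv_sqrt_radicand_deriv (S1 t) (S2 t) (V1 t) (V2 t) x)"
      using V pos by (intro continuous_on_Times_inv_sqrt_radicand_deriv)
  qed
  then show ?thesis using at_within_open[OF U(3,1)] by simp
qed

lemma period_has_derivative_along_line:
  assumes triple: "root_triple (J + t0 * dJ) (E + t0 * dE) s1 s2"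
  shows "((\<lambda>t. period (J + t * dJ) (E + t * dE)) has_real_derivative
      2 * sqrt 2 * integral {0..pi / 2} (inv_sqrt_radicand_deriv s1 s2
        (root_velocity (J + t0 * dJ) (E + t0 * dE) dJ dE s1)
        (root_velocity (J + t0 * dJ) (E + t0 * dE) dJ dE s2))) (at t0)"
proof -
  define Jf where "Jf t = J + t * dJ" for t
  define Ef where "Ef t = E + t * dE" for t
  define S1 where "S1 t = squared_root1 (Jf t) (Ef t)" for t
  define S2 where "S2 t = squared_root2 (Jf t) (Ef t)" for t
  define V1 where "V1 t = root_velocity (Jf t) (Ef t) dJ dE (S1 t)" for t
  define V2 where "V2 t = root_velocity (Jf t) (Ef t) dJ dE (S2 t)" for t
  have JE: "(Jf has_real_derivative dJ) (at t)" "(Ef has_real_derivative dE) (at t)" for t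
    unfolding Jf_def Ef_def by (auto intro!: derivative_eq_intros)
  have "(Jf \<longlongrightarrow> Jf t0) (nhds t0)" "(Ef \<longlongrightarrow> Ef t0) (nhds t0)"
    unfolding Jf_def Ef_def by (intro tendsto_intros filterlim_ident)+
  from squared_roots_tendsto(1)[OF _ this] triple
  have "\<forall>\<^sub>F t in nhds t0. root_triple (Jf t) (Ef t) (S1 t) (S2 t)"
    by (simp add: Jf_def Ef_def S1_def S2_def)
  then obtain \<delta> where "\<delta> > 0" and near: "\<And>t. dist t t0 < \<delta> \<Longrightarrow> root_triple (Jf t) (Ef t) (S1 t) (S2 t)"
    unfolding eventually_nhds_metric by blast
  define U where "U = ball t0 \<delta>"
  have U: "open U" "t0 \<in> U" "convex U" using \<open>\<delta> > 0\<close> by (simp_all add: U_def)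
  have triple_U: "root_triple (Jf t) (Ef t) (S1 t) (S2 t)" if "t \<in> U" for t
    using near[of t] that by (simp add: U_def dist_commute)
  have S_deriv: "(S1 has_real_derivative V1 t) (at t)" "(S2 has_real_derivative V2 t) (at t)"
    if "t \<in> U" for t
    using squared_roots_has_derivative[OF JE(1) JE(2) triple_U[OF that]]
    unfolding V1_def V2_def by (simp_all add: S1_def[abs_def] S2_def[abs_def])
  then have S_cont: "continuous_on U S1" "continuous_on U S2"
    by (auto intro!: continuous_at_imp_continuous_on DERIV_isCont)
  have "radial_cubic_deriv (Ef t) (S1 t) \<noteq> 0" "radial_cubic_deriv (Ef t) (S2 t) \<noteq> 0" if "t \<in> U" for t
    using radial_cubic_deriv_root_triple[OF triple_U[OF that]] root_tripleD[OF triple_U[OF that]] by auto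
  then have V_cont: "continuous_on U V1" "continuous_on U V2"
    unfolding V1_def V2_def root_velocity_def radial_cubic_deriv_def Jf_def Ef_def
    by (intro continuous_intros S_cont; simp)+
  have "((\<lambda>t. 2 * sqrt 2 * integral {0..pi / 2} (\<lambda>x. 1 / sqrt (radicand (S1 t) (S2 t) x)))
      has_real_derivative 2 * sqrt 2 * integral {0..pi / 2} (inv_sqrt_radicand_deriv (S1 t0) (S2 t0) (V1 t0) (V2 t0)))
      (at t0)"
    using integral_inv_sqrt_radicand_has_derivative[OF U(1,3,2) S_deriv V_cont root_triple_radicand_pos[OF triple_U]]
    by (rule DERIV_cmult)
  then have "((\<lambda>t. period (Jf t) (Ef t)) has_real_derivative
      2 * sqrt 2 * integral {0..pi / 2} (inv_sqrt_radicand_deriv (S1 t0) (S2 t0) (V1 t0) (V2 t0))) (at t0)"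
    by (rule has_field_derivative_transform_within_open[OF _ U(1,2)])
      (simp add: period_eq_integral_radicand[OF triple_U])
  moreover have "S1 t0 = s1" "S2 t0 = s2"
    using squared_roots_root_triple triple by (simp_all add: S1_def S2_def Jf_def Ef_def)
  ultimately show ?thesis by (simp add: V1_def V2_def Jf_def Ef_def)
qed

section \<open>Sign of the derivative\<close>

lemma has_integral_reflect_Icc:
  fixes f :: "real \<Rightarrow> 'b::real_normed_vector"
  assumes "(f has_integral I) {a..b}"
  shows "((\<lambda>t. f (a + b - t)) has_integral I) {a..b}"
  using has_integral_shift_real_ivl[of "\<lambda>x. f (- x)" I "- b" "- a" "- (a + b)"] assms by (simp add: add.commute)

lemma integral_pos_if_continuous_pos:
  fixes f :: "real \<Rightarrow> real"
  assumes "a < b" "continuous_on {a..b} f" "\<And>t. t \<in> {a..b} \<Longrightarrow> 0 < f t"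
  shows "0 < integral {a..b} f"
proof -
  obtain t0 where t0: "t0 \<in> {a..b}" "\<And>t. t \<in> {a..b} \<Longrightarrow> f t0 \<le> f t"
    using continuous_attains_inf[OF compact_Icc _ assms(2)] assms(1) by auto
  have "(b - a) * f t0 \<le> integral {a..b} f"
    using has_integral_le[OF has_integral_const_real[of "f t0" a b]
        integrable_integral[OF integrable_continuous_interval[OF assms(2)]]] t0 assms(1)
    by simp
  moreover have "0 < (b - a) * f t0" using assms(1,3) t0(1) by simp
  ultimately show ?thesis by linarith
qed

lemma continuous_on_inv_sqrt_radicand_deriv:
  assumes "\<And>t. 0 < radicand s1 s2 t"
  shows "continuous_on A (inv_sqrt_radicand_deriv s1 s2 ds1 ds2)"
proof -
  have "continuous_on A (\<lambda>t. radicand s1 s2 t)"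
    unfolding radicand_def by (intro continuous_intros)
  moreover have "2 * radicand s1 s2 t * sqrt (radicand s1 s2 t) \<noteq> 0" for t
    using assms[of t] by simp
  ultimately show ?thesis
    unfolding inv_sqrt_radicand_deriv_def[abs_def] by (intro continuous_intros) simp_all
qed

lemma inv_sqrt_radicand_deriv_symmetrized_pos:
  assumes s: "s1 \<le> s2" "s1 + 2 * s2 < 2" and "0 < \<beta>" "0 < \<alpha> + \<beta>"
  shows "0 < inv_sqrt_radicand_deriv s1 s2 \<alpha> \<beta> t + inv_sqrt_radicand_deriv s1 s2 \<alpha> \<beta> (pi / 2 - t)"
proof -
  define u where "u = (sin t) ^ 2"
  define v where "v = (cos t) ^ 2"
  define \<phi> where "\<phi> D = 1 / (2 * D * sqrt D)" for D :: real
  define w where "w = \<phi> (radicand s1 s2 t)"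
  define w' where "w' = \<phi> (radicand s1 s2 (pi / 2 - t))"
  have D: "radicand s1 s2 t = 2 - s1 - s2 - (s1 * v + s2 * u)"
    "radicand s1 s2 (pi / 2 - t) = 2 - s1 - s2 - (s1 * u + s2 * v)"
    by (simp_all add: radicand_def u_def v_def cos_diff sin_diff)
  have \<phi>_antimono: "\<phi> D' \<le> \<phi> D" if "0 < D" "D \<le> D'" for D D'
    unfolding \<phi>_def using that by (intro divide_left_mono mult_mono mult_pos_pos) auto
  have "(u - v) * (w - w') \<ge> 0"
  proof (cases "u \<le> v")
    case True
    then have "radicand s1 s2 (pi / 2 - t) \<le> radicand s1 s2 t"
      using s(1) mult_right_mono[of s1 s2 "v - u"] unfolding D by (simp add: algebra_simps)
    then have "w \<le> w'" unfolding w_def w'_def using radicand_pos[OF s] by (rule \<phi>_antimono[rotated])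
    then show ?thesis using True by (simp add: mult_nonpos_nonpos)
  next
    case False
    then have "radicand s1 s2 t \<le> radicand s1 s2 (pi / 2 - t)"
      using s(1) mult_right_mono[of s1 s2 "u - v"] unfolding D by (simp add: algebra_simps)
    then have "w' \<le> w" unfolding w_def w'_def using radicand_pos[OF s] by (rule \<phi>_antimono[rotated])
    then show ?thesis using False by simp
  qed
  moreover have "0 < w" "0 < w'" using radicand_pos[OF s] by (simp_all add: w_def w'_def \<phi>_def)
  moreover have "0 \<le> u" "0 \<le> v" by (simp_all add: u_def v_def)
  ultimately have "0 \<le> \<beta> * ((u - v) * (w - w'))" "0 < (\<alpha> + \<beta>) * ((1 + v) * w + (1 + u) * w')"
    using assms(3,4) by (simp_all add: add_pos_pos)
  then have "0 < \<beta> * ((u - v) * (w - w')) + (\<alpha> + \<beta>) * ((1 + v) * w + (1 + u) * w')"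
    by linarith
  also have "\<dots> = w * (\<alpha> * (1 + v) + \<beta> * (1 + u)) + w' * (\<alpha> * (1 + u) + \<beta> * (1 + v))"
    by (simp add: algebra_simps)
  also have "\<dots> = inv_sqrt_radicand_deriv s1 s2 \<alpha> \<beta> t + inv_sqrt_radicand_deriv s1 s2 \<alpha> \<beta> (pi / 2 - t)"
    by (simp add: inv_sqrt_radicand_deriv_def w_def w'_def \<phi>_def u_def v_def cos_diff sin_diff mult.commute)
  finally show ?thesis .
qed

lemma integral_inv_sqrt_radicand_deriv_pos:
  assumes s: "s1 \<le> s2" "s1 + 2 * s2 < 2" and "0 < \<beta>" "0 < \<alpha> + \<beta>"
  shows "0 < integral {0..pi / 2} (inv_sqrt_radicand_deriv s1 s2 \<alpha> \<beta>)"
proof -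
  let ?k = "inv_sqrt_radicand_deriv s1 s2 \<alpha> \<beta>"
  have cont: "continuous_on A ?k" for A
    using radicand_pos[OF s] by (rule continuous_on_inv_sqrt_radicand_deriv)
  have "(?k has_integral integral {0..pi / 2} ?k) {0..pi / 2}"
    by (intro integrable_integral integrable_continuous_interval cont)
  from has_integral_add[OF this has_integral_reflect_Icc[OF this]]
  have "((\<lambda>t. ?k t + ?k (pi / 2 - t)) has_integral 2 * integral {0..pi / 2} ?k) {0..pi / 2}"
    by simp
  moreover have "0 < integral {0..pi / 2} (\<lambda>t. ?k t + ?k (pi / 2 - t))"
    using inv_sqrt_radicand_deriv_symmetrized_pos[OF assms]
    by (intro integral_pos_if_continuous_pos continuous_intros cont continuous_on_compose2[OF cont]) auto
  ultimately show ?thesis by (simp add: integral_unique)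
qed

lemma integral_inv_sqrt_radicand_deriv_neg:
  assumes s: "s1 \<le> s2" "s1 + 2 * s2 < 2" and "\<beta> < 0" "\<alpha> + \<beta> < 0"
  shows "integral {0..pi / 2} (inv_sqrt_radicand_deriv s1 s2 \<alpha> \<beta>) < 0"
proof -
  have "inv_sqrt_radicand_deriv s1 s2 \<alpha> \<beta> = (\<lambda>t. - inv_sqrt_radicand_deriv s1 s2 (- \<alpha>) (- \<beta>) t)"
    by (simp add: fun_eq_iff inv_sqrt_radicand_deriv_def algebra_simps minus_divide_left)
  then show ?thesis
    using integral_inv_sqrt_radicand_deriv_pos[OF s, of "- \<beta>" "- \<alpha>"] assms(3,4) by (simp add: integral_neg)
qed

lemma root_velocity_energy_signs:
  assumes "root_triple J E s1 s2"
  shows "0 < root_velocity J E 0 1 s2" "0 < root_velocity J E 0 1 s1 + root_velocity J E 0 1 s2"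
proof -
  define s3 where "s3 = 2 - s1 - s2"
  note s = root_tripleD[OF assms, folded s3_def]
  note P = radial_cubic_deriv_root_triple[OF assms, folded s3_def]
  show "0 < root_velocity J E 0 1 s2"
    using s by (simp add: root_velocity_def P)
  have "root_velocity J E 0 1 s1 + root_velocity J E 0 1 s2 = 4 * s3 / ((s3 - s1) * (s3 - s2))"
    using s(1-3) unfolding root_velocity_def P by (simp add: divide_simps; algebra)
  then show "0 < root_velocity J E 0 1 s1 + root_velocity J E 0 1 s2"
    using s by simp
qed

lemma root_velocity_momentum_signs:
  assumes "root_triple J E s1 s2" "0 < J"
  shows "root_velocity J E 1 0 s2 < 0" "root_velocity J E 1 0 s1 + root_velocity J E 1 0 s2 < 0"
proof -
  define s3 where "s3 = 2 - s1 - s2"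
  note s = root_tripleD[OF assms(1), folded s3_def]
  note P = radial_cubic_deriv_root_triple[OF assms(1), folded s3_def]
  show "root_velocity J E 1 0 s2 < 0"
    using s assms(2) by (simp add: root_velocity_def P)
  have "root_velocity J E 1 0 s1 + root_velocity J E 1 0 s2 = - (4 * J / ((s3 - s1) * (s3 - s2)))"
    using s(1-3) unfolding root_velocity_def P by (simp add: divide_simps; algebra)
  then show "root_velocity J E 1 0 s1 + root_velocity J E 1 0 s2 < 0"
    using s assms(2) by simp
qed

theorem proposition4:
  fixes J E :: real
  assumes "(J, E) \<in> D1"
  shows "(\<exists>d. ((\<lambda>e. period J e) has_real_derivative d) (at E) \<and> d > 0)
       \<and> (\<exists>d. ((\<lambda>j. period j E) has_real_derivative d) (at J) \<and> d < 0)"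
proof -
  obtain s1 s2 where triple: "root_triple J E s1 s2" using D1_root_triple[OF assms] .
  have "0 < J" using assms by (simp add: D1_def)
  have s: "s1 \<le> s2" "s1 + 2 * s2 < 2" using root_tripleD[OF triple] by simp_all
  have "((\<lambda>e. period J e) has_real_derivative 2 * sqrt 2 * integral {0..pi / 2}
      (inv_sqrt_radicand_deriv s1 s2 (root_velocity J E 0 1 s1) (root_velocity J E 0 1 s2))) (at E)"
    using period_has_derivative_along_line[of J E 0 0 1 s1 s2] triple by simp
  moreover have "0 < integral {0..pi / 2}
      (inv_sqrt_radicand_deriv s1 s2 (root_velocity J E 0 1 s1) (root_velocity J E 0 1 s2))"
    using integral_inv_sqrt_radicand_deriv_pos[OF s root_velocity_energy_signs[OF triple]] .
  moreover have "((\<lambda>j. period j E) has_real_derivative 2 * sqrt 2 * integral {0..pi / 2}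
      (inv_sqrt_radicand_deriv s1 s2 (root_velocity J E 1 0 s1) (root_velocity J E 1 0 s2))) (at J)"
    using period_has_derivative_along_line[of 0 J 1 E 0 s1 s2] triple by simp
  moreover have "integral {0..pi / 2}
      (inv_sqrt_radicand_deriv s1 s2 (root_velocity J E 1 0 s1) (root_velocity J E 1 0 s2)) < 0"
    using integral_inv_sqrt_radicand_deriv_neg[OF s root_velocity_momentum_signs[OF triple \<open>0 < J\<close>]] .
  ultimately show ?thesis by (auto simp: mult_pos_neg)
qed

end
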